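(* Let $G$ be a group acting effectively by homeomorphisms on a Tychonoff space $X$ via $\theta$, let $\tau_p$ be the topology of pointwise convergence on $G$ for this action, and assume that $((G,\tau_p),X,\theta)$ is a $G$-Tychonoff space. Let $bX$ be a $G$-compactification of $X$ and let $\tilde\theta:G\times bX\to bX$ be the extended action. Then the topology of pointwise convergence $\tau_p^{bX}$ on $G$ for $\tilde\theta$ is the least admissible group topology on $G$ for the action on $bX$, and $\tau_p^{bX}=\tau_p$.
   Context: All spaces are Tychonoff. For a group $G$ acting effectively by homeomorphisms on a space $X$, the topology of pointwise convergence $\tau_p$ on $G$ is the topology with subbase the sets $[x,O]=\{g\in G: gx\in O\}$, $x\in X$, $O$ open in $X$. A group topology on $G$ is admissible for the action if it makes $G$ a topological group and the action $G\times X\to X$ continuous. An equiuniformity on a $G$-space $X$ (topological group $G$ acting continuously) is a uniformity compatible with the topology of $X$ such that every $g\in G$ acts uniformly continuously and for every uniform cover $u$ there are a neighbourhood $O$ of the identity $e$ and a uniform cover $v$ with $\{OV:V\in v\}$ refining $u$; $X$ is $G$-Tychonoff if it admits an equiuniformity. A $G$-compactification of $X$ is the completion of $X$ with respect to a totally bounded equiuniformity; the action extends continuously to it and the embedding is equivariant. *)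

theory Defs
  imports "HOL-Analysis.Analysis" "HOL-Algebra.Group"
begin

definition tychonoff_space :: "'a topology \<Rightarrow> bool" where
  "tychonoff_space X \<longleftrightarrow> completely_regular_space X \<and> t1_space X"

definition action_by_homeos ::
  "('g, 'm) monoid_scheme \<Rightarrow> 'a topology \<Rightarrow> ('g \<Rightarrow> 'a \<Rightarrow> 'a) \<Rightarrow> bool" where
  "action_by_homeos G X theta \<longleftrightarrow> group G \<and>
     (\<forall>g\<in>carrier G. homeomorphic_map X X (theta g)) \<and>
     (\<forall>x\<in>topspace X. theta \<one>\<^bsub>G\<^esub> x = x) \<and>
     (\<forall>g\<in>carrier G. \<forall>h\<in>carrier G. \<forall>x\<in>topspace X.
         theta (g \<otimes>\<^bsub>G\<^esub> h) x = theta g (theta h x))"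

definition effective_action ::
  "('g, 'm) monoid_scheme \<Rightarrow> 'a topology \<Rightarrow> ('g \<Rightarrow> 'a \<Rightarrow> 'a) \<Rightarrow> bool" where
  "effective_action G X theta \<longleftrightarrow> action_by_homeos G X theta \<and>
     (\<forall>g\<in>carrier G. (\<forall>x\<in>topspace X. theta g x = x) \<longrightarrow> g = \<one>\<^bsub>G\<^esub>)"

text \<open>The topology of pointwise convergence: subbase [x,O] = {g. g x \<in> O}.
  (The whole carrier is added to the subbase; this does not change the
  generated topology but makes the underlying set equal to carrier G
  also when X is empty.)\<close>
definition pointwise_topology ::
  "('g, 'm) monoid_scheme \<Rightarrow> 'a topology \<Rightarrow> ('g \<Rightarrow> 'a \<Rightarrow> 'a) \<Rightarrow> 'g topology" where
  "pointwise_topology G X theta = topology_generated_by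
     (insert (carrier G)
       {{g \<in> carrier G. theta g x \<in> W} | x W. x \<in> topspace X \<and> openin X W})"

definition group_topology :: "('g, 'm) monoid_scheme \<Rightarrow> 'g topology \<Rightarrow> bool" where
  "group_topology G T \<longleftrightarrow> group G \<and> topspace T = carrier G \<and>
     continuous_map (prod_topology T T) T (\<lambda>(g, h). g \<otimes>\<^bsub>G\<^esub> h) \<and>
     continuous_map T T (\<lambda>g. inv\<^bsub>G\<^esub> g)"

definition G_space ::
  "('g, 'm) monoid_scheme \<Rightarrow> 'g topology \<Rightarrow> 'a topology \<Rightarrow> ('g \<Rightarrow> 'a \<Rightarrow> 'a) \<Rightarrow> bool" where
  "G_space G T X theta \<longleftrightarrow> group_topology G T \<and> action_by_homeos G X theta \<and>
     continuous_map (prod_topology T X) X (\<lambda>(g, x). theta g x)"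

definition admissible_topology ::
  "('g, 'm) monoid_scheme \<Rightarrow> 'a topology \<Rightarrow> ('g \<Rightarrow> 'a \<Rightarrow> 'a) \<Rightarrow> 'g topology \<Rightarrow> bool" where
  "admissible_topology G X theta T \<longleftrightarrow> group_topology G T \<and>
     continuous_map (prod_topology T X) X (\<lambda>(g, x). theta g x)"

definition coarser_topology :: "'g topology \<Rightarrow> 'g topology \<Rightarrow> bool" where
  "coarser_topology S T \<longleftrightarrow> (\<forall>U. openin S U \<longrightarrow> openin T U)"

definition least_admissible_topology ::
  "('g, 'm) monoid_scheme \<Rightarrow> 'a topology \<Rightarrow> ('g \<Rightarrow> 'a \<Rightarrow> 'a) \<Rightarrow> 'g topology \<Rightarrow> bool" where
  "least_admissible_topology G X theta T \<longleftrightarrow> admissible_topology G X theta T \<and>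
     (\<forall>T'. admissible_topology G X theta T' \<longrightarrow> coarser_topology T T')"

definition is_cover :: "'a set \<Rightarrow> 'a set set \<Rightarrow> bool" where
  "is_cover S u \<longleftrightarrow> (\<forall>U\<in>u. U \<subseteq> S) \<and> \<Union>u = S"

definition refines :: "'a set set \<Rightarrow> 'a set set \<Rightarrow> bool" where
  "refines v u \<longleftrightarrow> (\<forall>V\<in>v. \<exists>U\<in>u. V \<subseteq> U)"

definition cover_star :: "'a set \<Rightarrow> 'a set set \<Rightarrow> 'a set" where
  "cover_star A u = \<Union>{U \<in> u. U \<inter> A \<noteq> {}}"

definition star_refines :: "'a set set \<Rightarrow> 'a set set \<Rightarrow> bool" where
  "star_refines v u \<longleftrightarrow> (\<forall>V\<in>v. \<exists>U\<in>u. cover_star V v \<subseteq> U)"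

definition cover_uniformity :: "'a set \<Rightarrow> 'a set set set \<Rightarrow> bool" where
  "cover_uniformity S \<U> \<longleftrightarrow> \<U> \<noteq> {} \<and> (\<forall>u\<in>\<U>. is_cover S u) \<and>
     (\<forall>u\<in>\<U>. \<forall>v. is_cover S v \<and> refines u v \<longrightarrow> v \<in> \<U>) \<and>
     (\<forall>u\<in>\<U>. \<forall>v\<in>\<U>. \<exists>w\<in>\<U>. refines w u \<and> refines w v) \<and>
     (\<forall>u\<in>\<U>. \<exists>v\<in>\<U>. star_refines v u)"

definition compatible_uniformity :: "'a topology \<Rightarrow> 'a set set set \<Rightarrow> bool" where
  "compatible_uniformity X \<U> \<longleftrightarrow> cover_uniformity (topspace X) \<U> \<and>
     (\<forall>W. openin X W \<longleftrightarrow>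
        W \<subseteq> topspace X \<and> (\<forall>x\<in>W. \<exists>u\<in>\<U>. cover_star {x} u \<subseteq> W))"

definition act_set :: "('g \<Rightarrow> 'a \<Rightarrow> 'a) \<Rightarrow> 'g set \<Rightarrow> 'a set \<Rightarrow> 'a set" where
  "act_set theta N V = {theta g y | g y. g \<in> N \<and> y \<in> V}"

definition equiuniformity ::
  "('g, 'm) monoid_scheme \<Rightarrow> 'g topology \<Rightarrow> 'a topology \<Rightarrow> ('g \<Rightarrow> 'a \<Rightarrow> 'a)
     \<Rightarrow> 'a set set set \<Rightarrow> bool" where
  "equiuniformity G T X theta \<U> \<longleftrightarrow> compatible_uniformity X \<U> \<and>
     (\<forall>g\<in>carrier G. \<forall>u\<in>\<U>. {theta g -` U \<inter> topspace X | U. U \<in> u} \<in> \<U>) \<and>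
     (\<forall>u\<in>\<U>. \<exists>N v. openin T N \<and> \<one>\<^bsub>G\<^esub> \<in> N \<and> v \<in> \<U> \<and>
        refines {act_set theta N V | V. V \<in> v} u)"

definition G_Tychonoff ::
  "('g, 'm) monoid_scheme \<Rightarrow> 'g topology \<Rightarrow> 'a topology \<Rightarrow> ('g \<Rightarrow> 'a \<Rightarrow> 'a) \<Rightarrow> bool" where
  "G_Tychonoff G T X theta \<longleftrightarrow> G_space G T X theta \<and> (\<exists>\<U>. equiuniformity G T X theta \<U>)"

definition totally_bounded_uniformity :: "'a set \<Rightarrow> 'a set set set \<Rightarrow> bool" where
  "totally_bounded_uniformity S \<U> \<longleftrightarrow> (\<forall>u\<in>\<U>. \<exists>w\<subseteq>u. finite w \<and> \<Union>w = S)"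

text \<open>(B, e) is the completion of the totally bounded separated uniform space (X, U):
  B is compact Hausdorff, e embeds X densely into B, and U is the trace on X
  of the unique uniformity of B (whose uniform covers are the covers refined
  by an open cover of B).\<close>
definition completion_of ::
  "'a topology \<Rightarrow> 'a set set set \<Rightarrow> 'b topology \<Rightarrow> ('a \<Rightarrow> 'b) \<Rightarrow> bool" where
  "completion_of X \<U> B e \<longleftrightarrow> compact_space B \<and> Hausdorff_space B \<and>
     embedding_map X B e \<and> B closure_of (e ` topspace X) = topspace B \<and>
     \<U> = {u. is_cover (topspace X) u \<and>
            (\<exists>w. (\<forall>W\<in>w. openin B W) \<and> \<Union>w = topspace B \<and>
                 refines {e -` W \<inter> topspace X | W. W \<in> w} u)}"

definition G_compactification ::
  "('g, 'm) monoid_scheme \<Rightarrow> 'g topology \<Rightarrow> 'a topology \<Rightarrow> ('g \<Rightarrow> 'a \<Rightarrow> 'a)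
     \<Rightarrow> 'b topology \<Rightarrow> ('a \<Rightarrow> 'b) \<Rightarrow> bool" where
  "G_compactification G T X theta B e \<longleftrightarrow>
     (\<exists>\<U>. equiuniformity G T X theta \<U> \<and> totally_bounded_uniformity (topspace X) \<U> \<and>
          completion_of X \<U> B e)"

definition extended_action ::
  "('g, 'm) monoid_scheme \<Rightarrow> 'a topology \<Rightarrow> ('g \<Rightarrow> 'a \<Rightarrow> 'a)
     \<Rightarrow> 'b topology \<Rightarrow> ('a \<Rightarrow> 'b) \<Rightarrow> ('g \<Rightarrow> 'b \<Rightarrow> 'b) \<Rightarrow> bool" where
  "extended_action G X theta B e thetab \<longleftrightarrow>
     (\<forall>g\<in>carrier G. continuous_map B B (thetab g) \<and>
        (\<forall>x\<in>topspace X. thetab g (e x) = e (theta g x)))"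

end

theory Submission
  imports Defs
begin

text \<open>Every admissible topology makes the orbit maps \<open>g \<mapsto> g b\<close> continuous, and the
  pointwise topology is the coarsest topology with this property; so the pointwise topology
  of \<open>bX\<close> is the least admissible one as soon as it is admissible. The orbit maps of \<open>X\<close>
  factor through those of \<open>bX\<close> via the embedding, hence \<open>\<tau>\<^sub>p \<subseteq> \<tau>\<^sub>p\<^sup>b\<^sup>X\<close>.
  Conversely \<open>\<tau>\<^sub>p\<close> is admissible for \<open>bX\<close>: if \<open>g\<^sub>0 b \<in> O\<close>, shrink \<open>O\<close> twice by regularity
  to get a two-set open cover of \<open>bX\<close>. Its trace on \<open>X\<close> is uniform, so equiuniformity yields
  a neighbourhood \<open>N\<close> of the identity and a uniform cover whose \<open>N\<close>-saturation refines it.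
  By density of \<open>X\<close> and continuity of each extended homeomorphism, a neighbourhood of
  \<open>(g\<^sub>0, b)\<close> is mapped into the closure of a single member of the cover, and this member
  can only be the one whose closure lies in \<open>O\<close>.\<close>

lemma topology_generated_by_coarser:
  assumes "\<And>S. S \<in> \<S> \<Longrightarrow> openin T S"
  shows "coarser_topology (topology_generated_by \<S>) T"
  unfolding coarser_topology_def openin_topology_generated_by_iff
  using generate_topology_on_coarsest[OF istopology_openin assms] by blast

lemma coarser_topology_antisym:
  "coarser_topology S T \<Longrightarrow> coarser_topology T S \<Longrightarrow> S = T"
  unfolding coarser_topology_def by (metis topology_eq)

lemma continuous_map_orbit:
  assumes "continuous_map (prod_topology T X) X (\<lambda>(g, x). theta g x)" "x \<in> topspace X"
  shows "continuous_map T X (\<lambda>g. theta g x)"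
proof -
  have "continuous_map T (prod_topology T X) (\<lambda>g. (g, x))"
    using assms(2) by (simp add: continuous_map_pairwise o_def)
  from continuous_map_compose[OF this assms(1)] show ?thesis by (simp add: o_def)
qed

lemma continuous_map_into_embedding:
  assumes "embedding_map X Y e" "f \<in> topspace Z \<rightarrow> topspace X" "continuous_map Z Y (e \<circ> f)"
  shows "continuous_map Z X f"
proof -
  obtain e' where e': "homeomorphic_maps X (subtopology Y (e ` topspace X)) e e'"
    using assms(1) by (auto simp: embedding_map_def homeomorphic_map_maps)
  have "continuous_map Z (subtopology Y (e ` topspace X)) (e \<circ> f)"
    using assms(2,3) by (auto simp: continuous_map_in_subtopology)
  then have "continuous_map Z X (e' \<circ> (e \<circ> f))"
    using e' continuous_map_compose homeomorphic_maps_def by blast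
  then show ?thesis
    by (rule continuous_map_eq) (use assms(2) e' in \<open>auto simp: homeomorphic_maps_def\<close>)
qed

lemma regular_space_open_closure_of_subset:
  assumes "regular_space X" "openin X W" "x \<in> W"
  obtains U where "openin X U" "x \<in> U" "X closure_of U \<subseteq> W"
proof -
  have "neighbourhood_base_of (closedin X) X"
    using assms(1) by (simp add: neighbourhood_base_of_closedin)
  then have "\<exists>U V. openin X U \<and> closedin X V \<and> x \<in> U \<and> U \<subseteq> V \<and> V \<subseteq> W"
    using assms(2,3) unfolding neighbourhood_base_of by simp
  then obtain U V where "openin X U" "closedin X V" "x \<in> U" "U \<subseteq> V" "V \<subseteq> W"
    by blast
  then show thesis
    using that closure_of_minimal by (metis order_trans)
qed

lemma continuous_map_dense_image_closure_of:
  assumes "continuous_map X Y f" "openin X W" "X closure_of D = topspace X"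
    and "f ` (W \<inter> D) \<subseteq> C" "x \<in> W"
  shows "f x \<in> Y closure_of C"
proof -
  have "x \<in> W \<inter> X closure_of D"
    using assms(2,3,5) openin_subset by blast
  also have "\<dots> \<subseteq> X closure_of (W \<inter> D)"
    by (rule openin_Int_closure_of_subset[OF assms(2)])
  finally have "f x \<in> Y closure_of (f ` (W \<inter> D))"
    using continuous_map_image_closure_subset[OF assms(1)] by blast
  then show ?thesis
    using closure_of_mono[OF assms(4)] by blast
qed

lemma continuous_map_prod_topology_by_boxes:
  assumes "\<And>x y. \<lbrakk>x \<in> topspace X; y \<in> topspace Y\<rbrakk> \<Longrightarrow> f x y \<in> topspace Z"
    and "\<And>U x y. \<lbrakk>openin Z U; x \<in> topspace X; y \<in> topspace Y; f x y \<in> U\<rbrakk>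
           \<Longrightarrow> \<exists>N W. openin X N \<and> openin Y W \<and> x \<in> N \<and> y \<in> W \<and> (\<forall>x'\<in>N. \<forall>y'\<in>W. f x' y' \<in> U)"
  shows "continuous_map (prod_topology X Y) Z (\<lambda>(x, y). f x y)"
  unfolding continuous_map_def
proof (intro conjI allI impI)
  show "(\<lambda>(x, y). f x y) \<in> topspace (prod_topology X Y) \<rightarrow> topspace Z"
    using assms(1) by (simp add: Pi_iff split: prod.split)
  fix U assume U: "openin Z U"
  let ?S = "{z \<in> topspace (prod_topology X Y). (case z of (x, y) \<Rightarrow> f x y) \<in> U}"
  show "openin (prod_topology X Y) ?S"
    unfolding openin_prod_topology_alt
  proof (intro allI impI)
    fix x y assume "(x, y) \<in> ?S"
    then have "x \<in> topspace X" "y \<in> topspace Y" "f x y \<in> U"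
      by simp_all
    then have "\<exists>N W. openin X N \<and> openin Y W \<and> x \<in> N \<and> y \<in> W \<and> (\<forall>x'\<in>N. \<forall>y'\<in>W. f x' y' \<in> U)"
      by (rule assms(2)[OF U])
    then obtain N W where NW: "openin X N" "openin Y W" "x \<in> N" "y \<in> W"
      and box: "\<forall>x'\<in>N. \<forall>y'\<in>W. f x' y' \<in> U"
      by blast
    have "N \<times> W \<subseteq> ?S"
      using box openin_subset[OF NW(1)] openin_subset[OF NW(2)] by fastforce
    then show "\<exists>N W. openin X N \<and> openin Y W \<and> x \<in> N \<and> y \<in> W \<and> N \<times> W \<subseteq> ?S"
      using NW by blast
  qed
qed

lemma group_topology_right_translation:
  assumes "group_topology G T" "c \<in> carrier G"
  shows "continuous_map T T (\<lambda>g. g \<otimes>\<^bsub>G\<^esub> c)"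
proof -
  have mult: "continuous_map (prod_topology T T) T (\<lambda>(g, h). g \<otimes>\<^bsub>G\<^esub> h)"
    and "topspace T = carrier G"
    using assms(1) by (auto simp: group_topology_def)
  then have "continuous_map T (prod_topology T T) (\<lambda>g. (g, c))"
    using assms(2) by (simp add: continuous_map_pairwise o_def)
  from continuous_map_compose[OF this mult] show ?thesis by (simp add: o_def)
qed

lemma topspace_pointwise_topology [simp]:
  "topspace (pointwise_topology G X theta) = carrier G"
  by (auto simp: pointwise_topology_def)

lemma continuous_map_orbit_pointwise_topology:
  assumes "x \<in> topspace X" "\<And>g. g \<in> carrier G \<Longrightarrow> theta g x \<in> topspace X"
  shows "continuous_map (pointwise_topology G X theta) X (\<lambda>g. theta g x)"
  unfolding continuous_map_def topspace_pointwise_topology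
proof (intro conjI allI impI)
  fix W assume "openin X W"
  then have "{g \<in> carrier G. theta g x \<in> W} \<in>
      insert (carrier G) {{g \<in> carrier G. theta g x \<in> W} | x W. x \<in> topspace X \<and> openin X W}"
    using assms(1) by blast
  then show "openin (pointwise_topology G X theta) {g \<in> carrier G. theta g x \<in> W}"
    unfolding pointwise_topology_def by (rule topology_generated_by_Basis)
qed (use assms(2) in auto)

lemma pointwise_topology_coarser:
  assumes "topspace T = carrier G" "\<And>x. x \<in> topspace X \<Longrightarrow> continuous_map T X (\<lambda>g. theta g x)"
  shows "coarser_topology (pointwise_topology G X theta) T"
  unfolding pointwise_topology_def
proof (rule topology_generated_by_coarser)
  fix S assume "S \<in> insert (carrier G)
      {{g \<in> carrier G. theta g x \<in> W} | x W. x \<in> topspace X \<and> openin X W}"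
  then show "openin T S"
  proof
    assume "S = carrier G"
    then show ?thesis
      using assms(1) openin_topspace by metis
  next
    assume "S \<in> {{g \<in> carrier G. theta g x \<in> W} | x W. x \<in> topspace X \<and> openin X W}"
    then obtain x W where S: "S = {g \<in> carrier G. theta g x \<in> W}" "x \<in> topspace X" "openin X W"
      by blast
    show ?thesis
      using openin_continuous_map_preimage[OF assms(2)[OF S(2)] S(3)] S(1) assms(1) by simp
  qed
qed

lemma admissible_topology_finer_than_pointwise:
  assumes "admissible_topology G X theta T"
  shows "coarser_topology (pointwise_topology G X theta) T"
  using assms continuous_map_orbit
  by (intro pointwise_topology_coarser) (auto simp: admissible_topology_def group_topology_def)

lemma least_admissible_topology_pointwise:
  assumes "admissible_topology G X theta (pointwise_topology G X theta)"
  shows "least_admissible_topology G X theta (pointwise_topology G X theta)"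
  using assms admissible_topology_finer_than_pointwise
  by (auto simp: least_admissible_topology_def)

lemma action_by_homeos_in_topspace:
  assumes "action_by_homeos G X theta" "g \<in> carrier G" "x \<in> topspace X"
  shows "theta g x \<in> topspace X"
proof -
  have "continuous_map X X (theta g)"
    using assms(1,2) by (simp add: action_by_homeos_def homeomorphic_imp_continuous_map)
  then show ?thesis
    using assms(3) by (rule continuous_map_funspace[THEN funcset_mem])
qed

lemma extended_action_in_topspace:
  assumes "extended_action G X theta B e thetab" "g \<in> carrier G" "b \<in> topspace B"
  shows "thetab g b \<in> topspace B"
proof -
  have "continuous_map B B (thetab g)"
    using assms(1,2) by (simp add: extended_action_def)
  then show ?thesis
    using assms(3) by (rule continuous_map_funspace[THEN funcset_mem])
qed

lemma pointwise_topology_coarser_extension: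
  assumes emb: "embedding_map X B e"
    and act: "action_by_homeos G X theta"
    and ext: "extended_action G X theta B e thetab"
  shows "coarser_topology (pointwise_topology G X theta) (pointwise_topology G B thetab)"
proof (rule pointwise_topology_coarser)
  fix x assume x: "x \<in> topspace X"
  then have "e x \<in> topspace B"
    using emb by (auto simp: embedding_map_def homeomorphic_eq_everything_map)
  then have "continuous_map (pointwise_topology G B thetab) B (\<lambda>g. thetab g (e x))"
    using extended_action_in_topspace[OF ext] by (simp add: continuous_map_orbit_pointwise_topology)
  then have "continuous_map (pointwise_topology G B thetab) B (e \<circ> (\<lambda>g. theta g x))"
    by (rule continuous_map_eq) (use ext x in \<open>simp add: extended_action_def\<close>)
  moreover have "(\<lambda>g. theta g x) \<in> topspace (pointwise_topology G B thetab) \<rightarrow> topspace X"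
    using action_by_homeos_in_topspace[OF act _ x] by simp
  ultimately show "continuous_map (pointwise_topology G B thetab) X (\<lambda>g. theta g x)"
    using continuous_map_into_embedding[OF emb] by blast
qed simp

lemma refines_imageE:
  assumes "refines {f a | a. a \<in> A} {g b | b. b \<in> B}" "a \<in> A"
  obtains b where "b \<in> B" "f a \<subseteq> g b"
proof -
  have "f a \<in> {f a | a. a \<in> A}"
    using assms(2) by blast
  then obtain U where "U \<in> {g b | b. b \<in> B}" "f a \<subseteq> U"
    using assms(1) unfolding refines_def by blast
  then show thesis
    using that by blast
qed

lemma completion_of_open_cover_trace:
  assumes "completion_of X \<U> B e" "\<forall>W\<in>w. openin B W" "\<Union>w = topspace B"
  shows "{e -` W \<inter> topspace X | W. W \<in> w} \<in> \<U>"
proof -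
  have "x \<in> \<Union>{e -` W \<inter> topspace X | W. W \<in> w}" if "x \<in> topspace X" for x
  proof -
    have "e x \<in> topspace B"
      using assms(1) that
      by (auto simp: completion_of_def embedding_map_def homeomorphic_eq_everything_map)
    then obtain W where "W \<in> w" "e x \<in> W"
      using assms(3) by blast
    then show ?thesis
      using that by blast
  qed
  then have "is_cover (topspace X) {e -` W \<inter> topspace X | W. W \<in> w}"
    by (auto simp: is_cover_def)
  then show ?thesis
    using assms unfolding completion_of_def refines_def by blast
qed

lemma equiuniformity_neighbourhood_translate_into_cover:
  assumes eu: "equiuniformity G T X theta \<U>"
    and comp: "completion_of X \<U> B e"
    and g0: "g0 \<in> carrier G" and b: "b \<in> topspace B"
    and w: "\<forall>W\<in>w. openin B W" "\<Union>w = topspace B"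
  obtains N W W0 where "openin T N" "\<one>\<^bsub>G\<^esub> \<in> N" "openin B W" "b \<in> W" "W0 \<in> w"
    "\<forall>h\<in>N. \<forall>x\<in>topspace X. e x \<in> W \<longrightarrow> e (theta h (theta g0 x)) \<in> W0"
proof -
  have "{e -` W \<inter> topspace X | W. W \<in> w} \<in> \<U>"
    using completion_of_open_cover_trace[OF comp w] .
  then obtain N v where N: "openin T N" "\<one>\<^bsub>G\<^esub> \<in> N" "v \<in> \<U>"
    and Nv: "refines {act_set theta N V | V. V \<in> v} {e -` W \<inter> topspace X | W. W \<in> w}"
    using eu unfolding equiuniformity_def by blast
  have "{theta g0 -` V \<inter> topspace X | V. V \<in> v} \<in> \<U>"
    using eu g0 N(3) unfolding equiuniformity_def by blast
  then obtain w' where w': "\<forall>W\<in>w'. openin B W" "\<Union>w' = topspace B"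
    "refines {e -` W \<inter> topspace X | W. W \<in> w'} {theta g0 -` V \<inter> topspace X | V. V \<in> v}"
    using comp unfolding completion_of_def by blast
  obtain W where W: "W \<in> w'" "b \<in> W"
    using w'(2) b by blast
  obtain V where "V \<in> v" and WV: "e -` W \<inter> topspace X \<subseteq> theta g0 -` V \<inter> topspace X"
    using refines_imageE[OF w'(3) W(1)] .
  obtain W0 where "W0 \<in> w" and VW0: "act_set theta N V \<subseteq> e -` W0 \<inter> topspace X"
    using refines_imageE[OF Nv \<open>V \<in> v\<close>] .
  have "e (theta h (theta g0 x)) \<in> W0" if "h \<in> N" "x \<in> topspace X" "e x \<in> W" for h x
  proof -
    have "theta g0 x \<in> V"
      using WV that(2,3) by blast
    then have "theta h (theta g0 x) \<in> act_set theta N V"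
      using that(1) unfolding act_set_def by blast
    then show ?thesis
      using VW0 by blast
  qed
  moreover have "openin B W"
    using w'(1) W(1) by blast
  ultimately show thesis
    using that[OF N(1,2) _ W(2) \<open>W0 \<in> w\<close>] by blast
qed

lemma extended_action_locally_within_closure:
  assumes gt: "group_topology G T"
    and act: "action_by_homeos G X theta"
    and eu: "equiuniformity G T X theta \<U>"
    and comp: "completion_of X \<U> B e"
    and ext: "extended_action G X theta B e thetab"
    and g0: "g0 \<in> carrier G" and b: "b \<in> topspace B"
    and w: "\<forall>W\<in>w. openin B W" "\<Union>w = topspace B"
  obtains N W W0 where "openin T N" "g0 \<in> N" "openin B W" "b \<in> W" "W0 \<in> w"
    "\<forall>g\<in>N. \<forall>b'\<in>W. thetab g b' \<in> B closure_of W0"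
proof -
  interpret group G
    using gt by (simp add: group_topology_def)
  have ts: "topspace T = carrier G"
    using gt by (simp add: group_topology_def)
  have mult: "theta (h \<otimes>\<^bsub>G\<^esub> k) x = theta h (theta k x)"
    if "h \<in> carrier G" "k \<in> carrier G" "x \<in> topspace X" for h k x
    using act that by (simp add: action_by_homeos_def)
  obtain N W W0 where N: "openin T N" "\<one>\<^bsub>G\<^esub> \<in> N" and W: "openin B W" "b \<in> W" and "W0 \<in> w"
    and NW0: "\<forall>h\<in>N. \<forall>x\<in>topspace X. e x \<in> W \<longrightarrow> e (theta h (theta g0 x)) \<in> W0"
    using equiuniformity_neighbourhood_translate_into_cover[OF eu comp g0 b w] .
  define N' where "N' = {g \<in> topspace T. g \<otimes>\<^bsub>G\<^esub> inv\<^bsub>G\<^esub> g0 \<in> N}"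
  have "openin T N'"
    unfolding N'_def
  proof (rule openin_continuous_map_preimage[OF _ N(1)])
    show "continuous_map T T (\<lambda>g. g \<otimes>\<^bsub>G\<^esub> inv\<^bsub>G\<^esub> g0)"
      using gt g0 by (simp add: group_topology_right_translation)
  qed
  moreover have "g0 \<in> N'"
    using g0 N(2) ts by (simp add: N'_def)
  moreover have "thetab g b' \<in> B closure_of W0" if "g \<in> N'" "b' \<in> W" for g b'
  proof (rule continuous_map_dense_image_closure_of[OF _ W(1) _ _ that(2)])
    have g: "g \<in> carrier G" "g \<otimes>\<^bsub>G\<^esub> inv\<^bsub>G\<^esub> g0 \<in> N"
      using that(1) ts by (auto simp: N'_def)
    show "continuous_map B B (thetab g)"
      using ext g(1) by (simp add: extended_action_def)
    show "B closure_of (e ` topspace X) = topspace B"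
      using comp by (simp add: completion_of_def)
    show "thetab g ` (W \<inter> e ` topspace X) \<subseteq> W0"
    proof clarify
      fix x assume x: "e x \<in> W" "x \<in> topspace X"
      have "theta (g \<otimes>\<^bsub>G\<^esub> inv\<^bsub>G\<^esub> g0) (theta g0 x) = theta g x"
        using mult[of "g \<otimes>\<^bsub>G\<^esub> inv\<^bsub>G\<^esub> g0" g0 x] g(1) g0 x(2) by (simp add: m_assoc)
      moreover have "e (theta (g \<otimes>\<^bsub>G\<^esub> inv\<^bsub>G\<^esub> g0) (theta g0 x)) \<in> W0"
        using NW0 g(2) x by blast
      moreover have "thetab g (e x) = e (theta g x)"
        using ext g(1) x(2) by (simp add: extended_action_def)
      ultimately show "thetab g (e x) \<in> W0"
        by simp
    qed
  qed
  ultimately show thesis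
    using that[OF _ _ W \<open>W0 \<in> w\<close>] by blast
qed

lemma extended_action_locally_into_open:
  assumes gt: "group_topology G T"
    and act: "action_by_homeos G X theta"
    and eu: "equiuniformity G T X theta \<U>"
    and comp: "completion_of X \<U> B e"
    and ext: "extended_action G X theta B e thetab"
    and U: "openin B U" and g0: "g0 \<in> carrier G" and b: "b \<in> topspace B"
    and p: "thetab g0 b \<in> U"
  shows "\<exists>N W. openin T N \<and> openin B W \<and> g0 \<in> N \<and> b \<in> W \<and> (\<forall>g\<in>N. \<forall>b'\<in>W. thetab g b' \<in> U)"
proof -
  have reg: "regular_space B"
    using comp by (simp add: completion_of_def compact_Hausdorff_imp_regular_space)
  obtain W1 where W1: "openin B W1" "thetab g0 b \<in> W1" "B closure_of W1 \<subseteq> U"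
    using regular_space_open_closure_of_subset[OF reg U p] .
  obtain W2 where W2: "openin B W2" "thetab g0 b \<in> W2" "B closure_of W2 \<subseteq> W1"
    using regular_space_open_closure_of_subset[OF reg W1(1,2)] .
  have W2_closure: "W2 \<subseteq> B closure_of W2"
    using W2(1) by (simp add: closure_of_subset openin_subset)
  have cover: "\<forall>W\<in>{W1, topspace B - B closure_of W2}. openin B W"
    "\<Union>{W1, topspace B - B closure_of W2} = topspace B"
    using W1(1) W2(3) openin_subset by auto
  obtain N W W0 where N: "openin T N" "g0 \<in> N" and W: "openin B W" "b \<in> W"
    and W0: "W0 \<in> {W1, topspace B - B closure_of W2}"
    and NW: "\<forall>g\<in>N. \<forall>b'\<in>W. thetab g b' \<in> B closure_of W0"
    using extended_action_locally_within_closure[OF gt act eu comp ext g0 b cover] .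
  have "W0 = W1"
  proof (rule ccontr)
    assume "W0 \<noteq> W1"
    then have "W0 \<subseteq> topspace B - W2"
      using W0 W2_closure by blast
    then have "B closure_of W0 \<subseteq> topspace B - W2"
      using W2(1) by (simp add: closure_of_minimal closedin_diff)
    then show False
      using NW N(2) W(2) W2(2) by blast
  qed
  then have "\<forall>g\<in>N. \<forall>b'\<in>W. thetab g b' \<in> U"
    using NW W1(3) by blast
  then show ?thesis
    using N W by blast
qed

lemma extended_action_continuous:
  assumes gt: "group_topology G T"
    and act: "action_by_homeos G X theta"
    and eu: "equiuniformity G T X theta \<U>"
    and comp: "completion_of X \<U> B e"
    and ext: "extended_action G X theta B e thetab"
  shows "continuous_map (prod_topology T B) B (\<lambda>(g, b). thetab g b)"
proof -
  have ts: "topspace T = carrier G"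
    using gt by (simp add: group_topology_def)
  show ?thesis
  proof (rule continuous_map_prod_topology_by_boxes)
    fix g b assume "g \<in> topspace T" "b \<in> topspace B"
    then show "thetab g b \<in> topspace B"
      using extended_action_in_topspace[OF ext] ts by simp
  next
    fix U g b assume "openin B U" "g \<in> topspace T" "b \<in> topspace B" "thetab g b \<in> U"
    then show "\<exists>N W. openin T N \<and> openin B W \<and> g \<in> N \<and> b \<in> W \<and> (\<forall>g'\<in>N. \<forall>b'\<in>W. thetab g' b' \<in> U)"
      using extended_action_locally_into_open[OF gt act eu comp ext] ts by simp
  qed
qed

theorem mainTheorem1:
  fixes G :: "('g, 'm) monoid_scheme"
    and X :: "'a topology" and theta :: "'g \<Rightarrow> 'a \<Rightarrow> 'a"
    and B :: "'b topology" and e :: "'a \<Rightarrow> 'b" and thetab :: "'g \<Rightarrow> 'b \<Rightarrow> 'b"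
  assumes "tychonoff_space X"
    and "effective_action G X theta"
    and "G_Tychonoff G (pointwise_topology G X theta) X theta"
    and "G_compactification G (pointwise_topology G X theta) X theta B e"
    and "extended_action G X theta B e thetab"
  shows "least_admissible_topology G B thetab (pointwise_topology G B thetab)
         \<and> pointwise_topology G B thetab = pointwise_topology G X theta"
proof -
  define T where "T = pointwise_topology G X theta"
  have gt: "group_topology G T" and act: "action_by_homeos G X theta"
    using assms(3) by (auto simp: T_def G_Tychonoff_def G_space_def)
  obtain \<U> where eu: "equiuniformity G T X theta \<U>" and comp: "completion_of X \<U> B e"
    using assms(4) by (auto simp: T_def G_compactification_def)
  have adm: "admissible_topology G B thetab T"
    using gt extended_action_continuous[OF gt act eu comp assms(5)]
    by (simp add: admissible_topology_def)
  have "embedding_map X B e"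
    using comp by (simp add: completion_of_def)
  then have "coarser_topology T (pointwise_topology G B thetab)"
    unfolding T_def using act assms(5) by (rule pointwise_topology_coarser_extension)
  then have eq: "pointwise_topology G B thetab = T"
    using admissible_topology_finer_than_pointwise[OF adm] coarser_topology_antisym by blast
  have "least_admissible_topology G B thetab (pointwise_topology G B thetab)"
    by (rule least_admissible_topology_pointwise) (use adm eq in simp)
  then show ?thesis
    using eq T_def by simp
qed

end
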